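(* Let $X,Y$ be Banach lattices and let $S\colon X\to Y$ be sublinear and continuous. Then $S$ is Lipschitz: there exists $L>0$ with $\|Sx-Sy\|\le L\|x-y\|$ for all $x,y\in X$.
   Context: An operator $S\colon X\to Y$ is sublinear if it is convex, i.e. $S(\lambda x+(1-\lambda)y)\le\lambda Sx+(1-\lambda)Sy$ for all $x,y$, $\lambda\in[0,1]$, and positive homogeneous, i.e. $S(\lambda x)=\lambda Sx$ for all $\lambda>0$, $x\in X$. *)

theory Defs
  imports "HOL-Analysis.Analysis"
begin

text \<open>A Banach lattice: a real Banach space which is a vector lattice (ordered real
vector space whose order is a lattice) with a lattice norm, i.e.
|x| \<le> |y| implies norm x \<le> norm y, where |x| = sup x (-x).\<close>

class banach_lattice = banach + ordered_real_vector + lattice +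
  assumes lattice_norm_mono:
    "sup x (- x) \<le> sup y (- y) \<Longrightarrow> norm x \<le> norm y"

definition sublinear :: "('a::real_vector \<Rightarrow> 'b::ordered_real_vector) \<Rightarrow> bool" where
  "sublinear S \<longleftrightarrow>
     (\<forall>x y (t::real). 0 \<le> t \<and> t \<le> 1 \<longrightarrow>
        S (t *\<^sub>R x + (1 - t) *\<^sub>R y) \<le> t *\<^sub>R S x + (1 - t) *\<^sub>R S y) \<and>
     (\<forall>(t::real) x. t > 0 \<longrightarrow> S (t *\<^sub>R x) = t *\<^sub>R S x)"

end

theory Submission
  imports Defs
begin

text \<open>Subadditivity of \<open>S\<close> squeezes \<open>S x - S y\<close> between \<open>- S (y - x)\<close> and \<open>S (x - y)\<close>; in a
Banach lattice this gives \<open>norm (S x - S y) \<le> norm (S (y - x)) + norm (S (x - y))\<close>.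
Continuity at \<open>0\<close> and positive homogeneity yield \<open>norm (S z) \<le> K * norm z\<close>, whence
\<open>S\<close> is \<open>2 K\<close>-Lipschitz.\<close>

lemma sup_uminus_nonneg:
  fixes a :: "'a::{ordered_real_vector, lattice}"
  shows "0 \<le> sup a (- a)"
proof -
  let ?s = "sup a (- a)"
  have "a + - a \<le> ?s + ?s" by (intro add_mono) auto
  then have "0 \<le> (1/2::real) *\<^sub>R (?s + ?s)" by (intro scaleR_nonneg_nonneg) auto
  also have "(1/2::real) *\<^sub>R (?s + ?s) = ?s"
    by (metis scaleR_collapse scaleR_half_double)
  finally show ?thesis .
qed

lemma sup_uminus_of_nonneg:
  fixes a :: "'a::{ordered_ab_group_add, lattice}"
  assumes "0 \<le> a"
  shows "sup a (- a) = a"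
proof -
  have "- a \<le> a" using assms by (meson order_trans neg_le_0_iff_le)
  then show ?thesis by (simp add: sup_absorb1)
qed

lemma norm_sup_uminus [simp]:
  fixes a :: "'a::banach_lattice"
  shows "norm (sup a (- a)) = norm a"
proof -
  have "sup (sup a (- a)) (- sup a (- a)) = sup a (- a)"
    by (rule sup_uminus_of_nonneg[OF sup_uminus_nonneg])
  then show ?thesis
    by (intro antisym lattice_norm_mono) simp_all
qed

lemma norm_le_add_norm_if_between:
  fixes a b c :: "'a::banach_lattice"
  assumes "- b \<le> a" and "a \<le> c"
  shows "norm a \<le> norm b + norm c"
proof -
  let ?B = "sup b (- b)" and ?C = "sup c (- c)"
  have B: "0 \<le> ?B" and C: "0 \<le> ?C" by (rule sup_uminus_nonneg)+
  have "a \<le> ?C" using assms(2) by (meson order_trans sup_ge1)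
  then have "a \<le> ?B + ?C" using B by (simp add: add_increasing)
  moreover have "- a \<le> ?B" using assms(1) by (meson minus_le_iff order_trans sup_ge1)
  then have "- a \<le> ?B + ?C" using C by (simp add: add_increasing2)
  ultimately have "sup a (- a) \<le> sup (?B + ?C) (- (?B + ?C))"
    using sup_uminus_of_nonneg[of "?B + ?C"] B C by simp
  then have "norm a \<le> norm (?B + ?C)" by (rule lattice_norm_mono)
  also have "\<dots> \<le> norm ?B + norm ?C" by (rule norm_triangle_ineq)
  finally show ?thesis by simp
qed

lemma pos_homogeneous_zero:
  fixes S :: "'a::real_vector \<Rightarrow> 'b::real_vector"
  assumes "\<And>t x. t > 0 \<Longrightarrow> S (t *\<^sub>R x) = t *\<^sub>R S x"
  shows "S 0 = 0"
proof -
  have "S 0 = 2 *\<^sub>R S 0" using assms[of 2 0] by simp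
  then show ?thesis by (metis add_cancel_right_right scaleR_2)
qed

lemma sublinear_add_le:
  assumes "sublinear S"
  shows "S (a + b) \<le> S a + S b"
proof -
  have conv: "S (t *\<^sub>R x + (1 - t) *\<^sub>R y) \<le> t *\<^sub>R S x + (1 - t) *\<^sub>R S y"
    if "0 \<le> t" "t \<le> 1" for x y and t :: real
    using assms that unfolding sublinear_def by blast
  have hom: "S (2 *\<^sub>R x) = 2 *\<^sub>R S x" for x
    using assms unfolding sublinear_def by simp
  have "S ((1/2) *\<^sub>R (2 *\<^sub>R a) + (1 - 1/2) *\<^sub>R (2 *\<^sub>R b))
        \<le> (1/2) *\<^sub>R S (2 *\<^sub>R a) + (1 - 1/2) *\<^sub>R S (2 *\<^sub>R b)"
    by (rule conv) simp_all
  then show ?thesis by (simp add: hom)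
qed

lemma sublinear_diff_bounds:
  assumes "sublinear S"
  shows "- S (y - x) \<le> S x - S y" and "S x - S y \<le> S (x - y)"
  using sublinear_add_le[OF assms, of x "y - x"] sublinear_add_le[OF assms, of y "x - y"]
  by (simp_all add: algebra_simps)

lemma pos_homogeneous_norm_bound:
  fixes S :: "'a::real_normed_vector \<Rightarrow> 'b::real_normed_vector"
  assumes hom: "\<And>t x. t > 0 \<Longrightarrow> S (t *\<^sub>R x) = t *\<^sub>R S x"
    and "isCont S 0"
  shows "\<exists>K>0. \<forall>z. norm (S z) \<le> K * norm z"
proof -
  have S0: "S 0 = 0" using hom by (rule pos_homogeneous_zero)
  obtain d where d: "d > 0" and small: "\<And>z. norm z < d \<Longrightarrow> norm (S z) < 1"
    using \<open>isCont S 0\<close> S0 unfolding continuous_at_eps_delta dist_norm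
    by (metis diff_zero zero_less_one)
  have "norm (S z) \<le> (2 / d) * norm z" for z
  proof (cases "z = 0")
    case True
    then show ?thesis by (simp add: S0)
  next
    case False
    define t where "t = d / (2 * norm z)"
    have t: "t > 0" using d False by (simp add: t_def)
    have "norm (t *\<^sub>R z) < d" using d False by (simp add: t_def)
    then have "norm (S (t *\<^sub>R z)) < 1" by (rule small)
    then have "t * norm (S z) < 1" using hom[OF t] t by simp
    then show ?thesis using d False by (simp add: t_def field_simps)
  qed
  then show ?thesis using d by (intro exI[of _ "2 / d"]) auto
qed

theorem lemmaA7:
  fixes S :: "'a::banach_lattice \<Rightarrow> 'b::banach_lattice"
  assumes "sublinear S"
    and "continuous_on UNIV S"
  shows "\<exists>L>0. \<forall>x y. norm (S x - S y) \<le> L * norm (x - y)"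
proof -
  have "isCont S 0" using assms(2) by (simp add: continuous_on_eq_continuous_at)
  moreover have "\<And>t x. t > 0 \<Longrightarrow> S (t *\<^sub>R x) = t *\<^sub>R S x"
    using assms(1) by (simp add: sublinear_def)
  ultimately obtain K where K: "K > 0" "\<And>z. norm (S z) \<le> K * norm z"
    using pos_homogeneous_norm_bound by blast
  have "norm (S x - S y) \<le> (2 * K) * norm (x - y)" for x y
  proof -
    have "norm (S x - S y) \<le> norm (S (y - x)) + norm (S (x - y))"
      using sublinear_diff_bounds[OF assms(1)] by (rule norm_le_add_norm_if_between)
    also have "\<dots> \<le> K * norm (y - x) + K * norm (x - y)"
      by (intro add_mono K(2))
    finally show ?thesis by (simp add: norm_minus_commute)
  qed
  then show ?thesis using K(1) by (intro exI[of _ "2 * K"]) auto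
qed

end
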